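(* Let $n\ge2$, $M\in\mathbb{R}$, let $\widetilde f:B_M\to B$ be $\eta$-quasisymmetric, let $t_0<M-1$ and $t\in(0,1/2)$. Subdivide $Q$ into $(n-1)$-dimensional cubes $T_1,\dots,T_N$ of side length $(\lfloor 1/t\rfloor)^{-1}$ with edges parallel to $e_1,\dots,e_{n-1}$, and set $P_i=T_i\times[t_0,t_0+t]$, so the $P_i$ subdivide $S_t=Q\times[t_0,t_0+t]$. Then the number $N$ of boxes satisfies $N/t^{1-n}\to 2$ as $t\to0$. Moreover, there exists a constant $C_1>1$ depending only on $n$ and $\eta$ such that for each $i$, $$\frac{1}{C_1}\le\frac{\operatorname{vol}_n\widetilde f(P_i)}{(\operatorname{diam}\widetilde f(P_i))^n}\le C_1.$$
   Context: $B=Q\times\mathbb{R}$ where $Q\subset\mathbb{R}^{n-1}$ is the open cuboid with closure $[0,1]^{n-2}\times[0,2]$; $B$ is the fundamental beam of a fixed Zorich map $\mathcal{Z}$ (with automorphism group $G$ of isometries preserving the $n$-th coordinate, generated by a rank $n-1$ translation subgroup and a finite rotation group, identifying the sides of $B$), and $B$ carries the quotient of the Euclidean metric under $G$. $B_M=Q\times(-\infty,M)$. $\operatorname{vol}_n$ denotes $n$-dimensional Lebesgue measure. A map $h$ between metric spaces is $\eta$-quasisymmetric, for a homeomorphism $\eta:[0,\infty)\to[0,\infty)$, if $d(h(x),h(a))/d(h(x),h(b))\le\eta(d(x,a)/d(x,b))$ for all $x,a,b$ with $x\ne b$. *)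

theory Defs
  imports "HOL-Analysis.Analysis"
begin

text \<open>Points of R^n are modelled as pairs (y, s) with y in R^(n-1) = real^'m and
 s the n-th coordinate; so n = CARD('m) + 1 \<ge> 2. The product metric on
 real^'m \<times> real is the Euclidean one.\<close>

type_synonym 'm pt = "(real^'m) \<times> real"

definition cuboidQ :: "'m::finite \<Rightarrow> (real^'m) set" where
  "cuboidQ j0 = {y. \<forall>i. 0 < y$i \<and> y$i < (if i = j0 then 2 else 1)}"

definition beam :: "'m::finite \<Rightarrow> 'm pt set" where
  "beam j0 = cuboidQ j0 \<times> UNIV"

definition beamM :: "'m::finite \<Rightarrow> real \<Rightarrow> 'm pt set" where
  "beamM j0 M = cuboidQ j0 \<times> {..<M}"

inductive_set gen_grp :: "('a \<Rightarrow> 'a) set \<Rightarrow> ('a \<Rightarrow> 'a) set" for S where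
  gen_id: "id \<in> gen_grp S"
| gen_mul: "s \<in> S \<Longrightarrow> g \<in> gen_grp S \<Longrightarrow> s \<circ> g \<in> gen_grp S"
| gen_inv: "s \<in> S \<Longrightarrow> g \<in> gen_grp S \<Longrightarrow> inv s \<circ> g \<in> gen_grp S"

definition isometry :: "('a::metric_space \<Rightarrow> 'a) \<Rightarrow> bool" where
  "isometry g \<longleftrightarrow> surj g \<and> (\<forall>x y. dist (g x) (g y) = dist x y)"

definition lattice_translations :: "(real^'m::finite) set \<Rightarrow> ('m pt \<Rightarrow> 'm pt) set" where
  "lattice_translations V =
     {(\<lambda>x. x + ((\<Sum>v\<in>V. of_int (k v) *\<^sub>R v), 0)) | k. True}"

text \<open>Automorphism group of the fixed Zorich map: a group of isometries of R^n
 preserving the n-th coordinate, generated by a rank n-1 translation subgroup and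
 a finite rotation group, for which the beam B is a fundamental domain
 (the sides of B being identified by G).\<close>
definition zorich_group :: "('m::finite pt \<Rightarrow> 'm pt) set \<Rightarrow> 'm \<Rightarrow> bool" where
  "zorich_group G j0 \<longleftrightarrow>
     id \<in> G \<and> (\<forall>g\<in>G. \<forall>h\<in>G. g \<circ> h \<in> G) \<and> (\<forall>g\<in>G. bij g \<and> inv g \<in> G) \<and>
     (\<forall>g\<in>G. isometry g) \<and> (\<forall>g\<in>G. \<forall>x. snd (g x) = snd x) \<and>
     (\<exists>V R. finite V \<and> card V = CARD('m) \<and> independent V \<and>
        finite R \<and> R \<subseteq> G \<and> id \<in> R \<and> (\<forall>r\<in>R. \<forall>s\<in>R. r \<circ> s \<in> R \<and> inv r \<in> R) \<and>
        G = gen_grp (lattice_translations V \<union> R)) \<and>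
     (\<Union>g\<in>G. g ` closure (beam j0)) = UNIV \<and>
     (\<forall>g\<in>G. g \<noteq> id \<longrightarrow> g ` beam j0 \<inter> beam j0 = {})"

text \<open>Quotient metric on B induced by the Euclidean metric under G.\<close>
definition dB :: "('m::finite pt \<Rightarrow> 'm pt) set \<Rightarrow> 'm pt \<Rightarrow> 'm pt \<Rightarrow> real" where
  "dB G x y = Inf {dist x (g y) | g. g \<in> G}"

definition dB_diam :: "('m::finite pt \<Rightarrow> 'm pt) set \<Rightarrow> 'm pt set \<Rightarrow> real" where
  "dB_diam G S = (SUP p\<in>S \<times> S. dB G (fst p) (snd p))"

definition qs_gauge :: "(real \<Rightarrow> real) \<Rightarrow> bool" where
  "qs_gauge \<eta> \<longleftrightarrow> (\<exists>\<eta>'. homeomorphism {0..} {0..} \<eta> \<eta>')"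

definition quasisymmetric_on ::
  "('a \<Rightarrow> 'a \<Rightarrow> real) \<Rightarrow> ('b \<Rightarrow> 'b \<Rightarrow> real) \<Rightarrow> 'a set \<Rightarrow> ('a \<Rightarrow> 'b) \<Rightarrow> (real \<Rightarrow> real) \<Rightarrow> bool" where
  "quasisymmetric_on d d' S h \<eta> \<longleftrightarrow> inj_on h S \<and>
     (\<forall>x\<in>S. \<forall>a\<in>S. \<forall>b\<in>S. x \<noteq> b \<longrightarrow>
        d' (h x) (h a) / d' (h x) (h b) \<le> \<eta> (d x a / d x b))"

definition cube_idx :: "'m::finite \<Rightarrow> real \<Rightarrow> ('m \<Rightarrow> int) set" where
  "cube_idx j0 t = {j. \<forall>i. 0 \<le> j i \<and> j i < (if i = j0 then 2 else 1) * \<lfloor>1/t\<rfloor>}"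

definition cubeT :: "'m::finite \<Rightarrow> real \<Rightarrow> ('m \<Rightarrow> int) \<Rightarrow> (real^'m) set" where
  "cubeT j0 t j = {y \<in> cuboidQ j0. \<forall>i. real_of_int (j i) / real_of_int \<lfloor>1/t\<rfloor> \<le> y$i
        \<and> y$i \<le> real_of_int (j i + 1) / real_of_int \<lfloor>1/t\<rfloor>}"

definition boxP :: "'m::finite \<Rightarrow> real \<Rightarrow> real \<Rightarrow> ('m \<Rightarrow> int) \<Rightarrow> 'm pt set" where
  "boxP j0 t0 t j = cubeT j0 t j \<times> {t0..t0+t}"

end

theory Submission
  imports Defs
begin

text \<open>The count is \<open>card (cube_idx j0 t) = 2 * nat \<lfloor>1/t\<rfloor> ^ (n - 1)\<close>, and \<open>\<lfloor>1/t\<rfloor> * t \<rightarrow> 1\<close>.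

  For the volume ratio let \<open>c\<close> be the centre of a box \<open>P\<close>. The side of its cube lies between \<open>t\<close>
  and \<open>2 t\<close>, so \<open>P\<close> contains the Euclidean ball of radius \<open>t/4\<close> about \<open>c\<close> and lies within
  distance \<open>n t\<close> of \<open>c\<close>, while near \<open>c\<close> the quotient metric is Euclidean. By invariance of
  domain, \<open>f\<close> maps that ball onto a set containing the Euclidean ball about \<open>f c\<close> whose radius
  \<open>\<delta>\<close> is the distance to some \<open>f u\<close> with \<open>|c - u| = t/4\<close>, and quasisymmetry bounds all quotient
  distances from \<open>f c\<close> to \<open>f P\<close> by \<open>\<eta> (4 n) \<delta>\<close>. So the diameter \<open>D\<close> of \<open>f P\<close> is at most
  \<open>2 \<eta> (4 n) \<delta>\<close>, which gives the lower bound. For the upper bound, \<open>f P\<close> lies within quotient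
  distance \<open>D\<close> of \<open>f c\<close>, hence is covered by the \<open>G\<close>-translates of the Euclidean ball of radius
  \<open>2 D\<close> about \<open>f c\<close>; \<open>G\<close> moves the pieces back into that ball, disjointly since \<open>B\<close> is a
  fundamental domain and without changing their volume since \<open>G\<close> acts by isometries.\<close>

section \<open>Counting the cubes\<close>

lemma card_cube_idx:
  fixes j0 :: "'m::finite"
  assumes "0 < t"
  shows "card (cube_idx j0 t) = 2 * nat \<lfloor>1/t\<rfloor> ^ CARD('m)"
proof -
  define k where "k = \<lfloor>1/t\<rfloor>"
  have "0 \<le> k" using assms by (simp add: k_def)
  have "cube_idx j0 t = Pi\<^sub>E UNIV (\<lambda>i. {0..<(if i = j0 then 2 else 1) * k})"
    unfolding PiE_UNIV_domain cube_idx_def Pi_def k_def by auto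
  then have "card (cube_idx j0 t) = (\<Prod>i\<in>UNIV. (if i = j0 then 2 else 1) * nat k)"
    using \<open>0 \<le> k\<close> by (simp add: card_PiE) (intro prod.cong; simp add: nat_mult_distrib)
  also have "\<dots> = 2 * nat k ^ CARD('m)"
    by (simp add: prod.distrib)
  finally show ?thesis by (simp add: k_def)
qed

lemma tendsto_floor_inverse_times:
  "((\<lambda>t. real_of_int \<lfloor>1/t\<rfloor> * t) \<longlongrightarrow> 1) (at_right 0)"
proof (rule tendsto_sandwich[of "\<lambda>t. 1 - t" _ _ "\<lambda>t. 1"])
  have "1 - t \<le> real_of_int \<lfloor>1/t\<rfloor> * t \<and> real_of_int \<lfloor>1/t\<rfloor> * t \<le> 1" if "0 < t" for t :: real
  proof -
    have "1/t - 1 \<le> real_of_int \<lfloor>1/t\<rfloor>" by linarith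
    moreover have "real_of_int \<lfloor>1/t\<rfloor> * t \<le> 1/t * t"
      by (rule mult_right_mono) (use that in auto)
    ultimately show ?thesis using that by (simp add: field_simps)
  qed
  then show "\<forall>\<^sub>F t in at_right 0. 1 - t \<le> real_of_int \<lfloor>1/t\<rfloor> * t"
    and "\<forall>\<^sub>F t in at_right 0. real_of_int \<lfloor>1/t\<rfloor> * t \<le> 1"
    by (auto intro: eventually_mono[OF eventually_at_right_less])
  show "((\<lambda>t. 1 - t) \<longlongrightarrow> 1) (at_right (0::real))"
    by (auto intro!: tendsto_eq_intros)
qed simp

lemma tendsto_card_cube_idx:
  fixes j0 :: "'m::finite"
  shows "((\<lambda>t. real (card (cube_idx j0 t)) / t powr (1 - real (CARD('m) + 1))) \<longlongrightarrow> 2)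
           (at_right 0)"
proof -
  have "((\<lambda>t. 2 * (real_of_int \<lfloor>1/t\<rfloor> * t) ^ CARD('m)) \<longlongrightarrow> 2 * 1 ^ CARD('m)) (at_right 0)"
    by (intro tendsto_intros tendsto_floor_inverse_times)
  moreover have "\<forall>\<^sub>F t in at_right 0. 2 * (real_of_int \<lfloor>1/t\<rfloor> * t) ^ CARD('m)
      = real (card (cube_idx j0 t)) / t powr (1 - real (CARD('m) + 1))"
  proof (rule eventually_mono[OF eventually_at_right_less])
    fix t :: real assume "0 < t"
    then show "2 * (real_of_int \<lfloor>1/t\<rfloor> * t) ^ CARD('m)
        = real (card (cube_idx j0 t)) / t powr (1 - real (CARD('m) + 1))"
      by (simp add: card_cube_idx powr_minus powr_realpow power_mult_distrib divide_inverse)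
  qed
  ultimately show ?thesis by (simp add: tendsto_cong)
qed

section \<open>Quasisymmetric gauges\<close>

lemma
  assumes "qs_gauge \<eta>"
  shows qs_gauge_continuous: "continuous_on {0..} \<eta>"
    and qs_gauge_nonneg: "0 \<le> a \<Longrightarrow> 0 \<le> \<eta> a"
    and qs_gauge_zero: "\<eta> 0 = 0"
    and qs_gauge_strict_mono: "0 \<le> a \<Longrightarrow> a < b \<Longrightarrow> \<eta> a < \<eta> b"
proof -
  obtain \<eta>' where h: "homeomorphism {0..} {0..} \<eta> \<eta>'"
    using assms unfolding qs_gauge_def by blast
  then show cont: "continuous_on {0..} \<eta>" by (simp add: homeomorphism_def)
  have img: "\<eta> ` {0..} = {0..}" using h by (simp add: homeomorphism_def)
  then show nonneg: "0 \<le> \<eta> a" if "0 \<le> a" for a using that by auto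
  have inj: "inj_on \<eta> {0..}" using h by (metis homeomorphism_apply1 inj_on_inverseI)
  have between: "(\<eta> a < \<eta> x \<and> \<eta> x < \<eta> b) \<or> (\<eta> b < \<eta> x \<and> \<eta> x < \<eta> a)"
    if "0 \<le> a" "a < x" "x < b" for a x b
  proof (rule continuous_inj_imp_mono[OF that(2,3)])
    show "continuous_on {a..b} \<eta>" using cont by (rule continuous_on_subset) (use that in auto)
    show "inj_on \<eta> {a..b}" using inj by (rule inj_on_subset) (use that in auto)
  qed
  obtain z where z: "0 \<le> z" "\<eta> z = 0" using img by (metis atLeast_iff image_iff order_refl)
  show zero: "\<eta> 0 = 0"
  proof (rule ccontr)
    assume "\<eta> 0 \<noteq> 0"
    with z have "0 < z" by (cases "z = 0") auto
    with between[of 0 z "2 * z"] z nonneg[of "2 * z"] nonneg[of 0] show False by auto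
  qed
  show "\<eta> a < \<eta> b" if "0 \<le> a" "a < b"
  proof (cases "a = 0")
    case True
    with that zero nonneg[of b] inj show ?thesis
      unfolding inj_on_def by (metis atLeast_iff less_eq_real_def order_less_irrefl)
  next
    case False
    with between[of 0 a b] that zero nonneg[of b] show ?thesis by auto
  qed
qed

lemma qs_gauge_mono:
  assumes "qs_gauge \<eta>" "0 \<le> a" "a \<le> b"
  shows "\<eta> a \<le> \<eta> b"
  using qs_gauge_strict_mono[OF assms(1,2), of b] assms(3) by (cases "a = b") auto

lemma quasisymmetric_onD:
  assumes "quasisymmetric_on d d' S h \<eta>" "x \<in> S" "a \<in> S" "b \<in> S" "x \<noteq> b"
    and "0 < d' (h x) (h b)"
  shows "d' (h x) (h a) \<le> \<eta> (d x a / d x b) * d' (h x) (h b)"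
  using assms unfolding quasisymmetric_on_def by (simp add: divide_le_eq)

lemma qs_gauge_small_near_zero:
  assumes "qs_gauge \<eta>" "0 < \<epsilon>"
  obtains s where "0 < s" "\<And>z. 0 \<le> z \<Longrightarrow> z < s \<Longrightarrow> \<eta> z < \<epsilon>"
proof -
  obtain s where "0 < s" "\<And>z. z \<in> {0..} \<Longrightarrow> dist z 0 < s \<Longrightarrow> dist (\<eta> z) (\<eta> 0) < \<epsilon>"
    using qs_gauge_continuous[OF assms(1)] assms(2) unfolding continuous_on_iff
    by (meson atLeast_iff order_refl)
  then show thesis
    using that qs_gauge_zero[OF assms(1)] qs_gauge_nonneg[OF assms(1)] by (auto simp: dist_real_def)
qed

section \<open>Lebesgue measure and invariance of domain\<close>

lemma measure_ball_scale:
  fixes c :: "'a::euclidean_space"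
  assumes "0 \<le> r"
  shows "measure lebesgue (ball c r) = measure lebesgue (ball (0::'a) 1) * r ^ DIM('a)"
  using content_ball_conv_unit_ball[OF assms, of c] by (simp add: measure_completion)

lemma measure_unit_ball_pos: "0 < measure lebesgue (ball (0::'a::euclidean_space) 1)"
  using content_ball_pos[of 1 "0::'a"] by (simp add: measure_completion)

lemma measure_cball_translate:
  fixes c d :: "'a::euclidean_space"
  shows "measure lebesgue (cball c r) = measure lebesgue (cball d r)"
  by (metis add.right_neutral cball_translation measure_translation)

lemma lmeasurable_outer_open_le:
  assumes "E \<in> lmeasurable" "0 < e"
  obtains T where "open T" "E \<subseteq> T" "T \<in> lmeasurable" "measure lebesgue T \<le> measure lebesgue E + e"
proof -
  obtain T where T: "open T" "E \<subseteq> T" "T - E \<in> lmeasurable" "emeasure lebesgue (T - E) < ennreal e"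
    using sets_lebesgue_outer_open[of E e] assms by (auto simp: fmeasurable_def)
  have TE: "T = E \<union> (T - E)" using T by auto
  have "measure lebesgue (T - E) < e"
    using T(3,4) by (metis emeasure_eq_measure2 ennreal_less_iff measure_nonneg)
  then have "measure lebesgue T \<le> measure lebesgue E + e"
    using measure_Un_le[of E lebesgue "T - E"] assms(1) T(3) TE by (auto simp: fmeasurable_def)
  moreover have "T \<in> lmeasurable" using assms(1) T(3) TE by (metis fmeasurable.Un)
  ultimately show thesis using that T(1,2) by blast
qed

lemma Vitali_cball_packing:
  fixes E T :: "'a::euclidean_space set"
  assumes "open T" "E \<subseteq> T"
  obtains C where "countable C"
    "\<And>i. i \<in> C \<Longrightarrow> fst i \<in> E \<and> 0 < snd i \<and> cball (fst i) (snd i) \<subseteq> T"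
    "pairwise (\<lambda>i j. disjnt (cball (fst i) (snd i)) (cball (fst j) (snd j))) C"
    "negligible (E - (\<Union>i\<in>C. cball (fst i) (snd i)))"
proof -
  define K where "K = {i. fst i \<in> E \<and> 0 < snd i \<and> cball (fst i) (snd i) \<subseteq> T}"
  have small_cball: "\<exists>i. i \<in> K \<and> x \<in> cball (fst i) (snd i) \<and> snd i < d"
    if "x \<in> E" "0 < d" for x d
  proof -
    have "x \<in> T" using assms(2) that(1) by blast
    then obtain \<epsilon> where "0 < \<epsilon>" "cball x \<epsilon> \<subseteq> T"
      using assms(1) open_contains_cball by metis
    moreover have "cball x (min \<epsilon> (d/2)) \<subseteq> cball x \<epsilon>" by (rule subset_cball) simp
    ultimately have "(x, min \<epsilon> (d/2)) \<in> K"
      using that by (simp add: K_def)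
    then show ?thesis using \<open>0 < d\<close> \<open>0 < \<epsilon>\<close> by (intro exI[of _ "(x, min \<epsilon> (d/2))"]) simp
  qed
  have "\<And>i. i \<in> K \<Longrightarrow> 0 < snd i" by (simp add: K_def)
  from Vitali_covering_theorem_cballs[of K snd E fst, OF this small_cball]
  obtain C where "countable C" "C \<subseteq> K"
    "pairwise (\<lambda>i j. disjnt (cball (fst i) (snd i)) (cball (fst j) (snd j))) C"
    "negligible (E - (\<Union>i\<in>C. cball (fst i) (snd i)))"
    by blast
  then show thesis using that unfolding K_def by blast
qed

text \<open>The library's \<open>measure_orthogonal_image\<close> is stated for \<open>real^'n\<close> only, whereas points
  here live in the product type \<open>'m pt\<close>. A Vitali packing by balls, which an isometry maps to
  balls of the same volume, gives the inequality in every Euclidean space.\<close>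

lemma measure_isometry_image_le:
  fixes h :: "'a::euclidean_space \<Rightarrow> 'a"
  assumes iso: "\<And>x y. dist (h x) (h y) = dist x y"
    and E: "E \<in> lmeasurable" and hE: "h ` E \<in> sets lebesgue"
  shows "measure lebesgue (h ` E) \<le> measure lebesgue E"
proof (rule field_le_epsilon)
  fix e :: real assume "0 < e"
  obtain T where T: "open T" "E \<subseteq> T" "T \<in> lmeasurable"
    "measure lebesgue T \<le> measure lebesgue E + e"
    using lmeasurable_outer_open_le[OF E \<open>0 < e\<close>] by blast
  obtain C where C: "countable C"
    "\<And>i. i \<in> C \<Longrightarrow> fst i \<in> E \<and> 0 < snd i \<and> cball (fst i) (snd i) \<subseteq> T"
    "pairwise (\<lambda>i j. disjnt (cball (fst i) (snd i)) (cball (fst j) (snd j))) C"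
    "negligible (E - (\<Union>i\<in>C. cball (fst i) (snd i)))"
    using Vitali_cball_packing[OF T(1,2)] by blast
  define N where "N = E - (\<Union>i\<in>C. cball (fst i) (snd i))"
  define U where "U = (\<Union>i\<in>C. cball (h (fst i)) (snd i))"
  have "negligible (h ` N)"
  proof (rule negligible_locally_Lipschitz_image)
    show "negligible N" using C(4) by (simp add: N_def)
    show "\<exists>T B. open T \<and> x \<in> T \<and> (\<forall>y\<in>N \<inter> T. norm (h y - h x) \<le> B * norm (y - x))" for x
      using iso by (intro exI[of _ UNIV] exI[of _ 1]) (simp add: dist_norm)
  qed simp
  have finite_bound: "measure lebesgue (\<Union>i\<in>F. cball (h (fst i)) (snd i)) \<le> measure lebesgue T"
    if F: "F \<subseteq> C" "finite F" for F
  proof -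
    have "measure lebesgue (\<Union>i\<in>F. cball (h (fst i)) (snd i))
        \<le> (\<Sum>i\<in>F. measure lebesgue (cball (h (fst i)) (snd i)))"
      by (rule measure_UNION_le) (use F in auto)
    also have "\<dots> = (\<Sum>i\<in>F. measure lebesgue (cball (fst i) (snd i)))"
      by (intro sum.cong refl measure_cball_translate)
    also have "\<dots> = measure lebesgue (\<Union>i\<in>F. cball (fst i) (snd i))"
      by (rule measure_UNION'[symmetric]) (use F C(3) in \<open>auto intro: pairwise_subset\<close>)
    also have "\<dots> \<le> measure lebesgue T"
      by (rule measure_mono_fmeasurable) (use F C(2) T(3) in \<open>auto simp: fmeasurableD\<close>)
    finally show ?thesis .
  qed
  have U: "U \<in> lmeasurable" "measure lebesgue U \<le> measure lebesgue T"
    unfolding U_def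
    using fmeasurable_UN_bound[OF C(1) _ finite_bound] measure_UN_bound[OF C(1) _ finite_bound] by auto
  have "h ` E \<subseteq> U \<union> h ` N"
    using iso by (fastforce simp: U_def N_def)
  then have "measure lebesgue (h ` E) \<le> measure lebesgue (U \<union> h ` N)"
    by (rule measure_mono_fmeasurable[OF _ hE])
       (use U \<open>negligible (h ` N)\<close> in \<open>auto simp: negligible_iff_null_sets fmeasurableI_null_sets\<close>)
  also have "\<dots> = measure lebesgue U"
    using U \<open>negligible (h ` N)\<close> by (simp add: measure_Un_null_set negligible_iff_null_sets fmeasurable_def)
  finally show "measure lebesgue (h ` E) \<le> measure lebesgue E + e" using U T(4) by linarith
qed

lemma measure_continuous_image_Union_compact_le:
  fixes f :: "'a::euclidean_space \<Rightarrow> 'b::euclidean_space"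
  assumes K: "\<And>k::nat. compact (K k)" and f: "continuous_on (\<Union>k. K k) f"
    and bound: "\<And>L. compact L \<Longrightarrow> L \<subseteq> (\<Union>k. K k) \<Longrightarrow> measure lebesgue (f ` L) \<le> B"
  shows "f ` (\<Union>k. K k) \<in> lmeasurable" "measure lebesgue (f ` (\<Union>k. K k)) \<le> B"
proof -
  have fK: "f ` K k \<in> lmeasurable" for k
    by (intro lmeasurable_compact compact_continuous_image continuous_on_subset[OF f] K) auto
  have finite_bound: "measure lebesgue (\<Union>k\<in>F. f ` K k) \<le> B" if "finite F" for F
  proof -
    have "compact (\<Union>k\<in>F. K k)" using that K by (intro compact_UN) auto
    then show ?thesis using bound[of "\<Union>k\<in>F. K k"] by (simp add: image_UN UN_mono)
  qed
  then show "f ` (\<Union>k. K k) \<in> lmeasurable" "measure lebesgue (f ` (\<Union>k. K k)) \<le> B"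
    unfolding image_UN
    using fmeasurable_UN_bound[of UNIV "\<lambda>k. f ` K k", OF _ fK finite_bound]
      measure_UN_bound[of UNIV "\<lambda>k. f ` K k", OF _ fK finite_bound] by auto
qed

lemma closed_Int_open_Union_compact:
  fixes A U :: "'a::euclidean_space set"
  assumes "closed A" "open U"
  obtains K where "\<And>k::nat. compact (K k)" "A \<inter> U = (\<Union>k. K k)"
proof -
  obtain C where C: "\<And>k::nat. compact (C k)" "\<Union>(range C) = U"
    using open_Union_compact_subsets[OF assms(2)] by metis
  show thesis
    by (rule that[of "\<lambda>k. A \<inter> C k"]) (use assms(1) C in \<open>auto intro: closed_Int_compact\<close>)
qed

lemma injective_image_contains_ball_to_sphere:
  fixes f :: "'a::euclidean_space \<Rightarrow> 'a"
  assumes f: "continuous_on (cball x r) f" "inj_on f (cball x r)" and "0 < r"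
  obtains u where "dist x u = r" "ball (f x) (dist (f x) (f u)) \<subseteq> f ` ball x r"
proof -
  define V where "V = f ` ball x r"
  have "open V" unfolding V_def
    using invariance_of_domain[OF continuous_on_subset[OF f(1)] open_ball inj_on_subset[OF f(2)]]
    by (simp add: ball_subset_cball)
  have "compact (f ` cball x r)" by (rule compact_continuous_image[OF f(1) compact_cball])
  moreover have V_sub: "V \<subseteq> f ` cball x r" unfolding V_def by (intro image_mono ball_subset_cball)
  ultimately have "V \<noteq> UNIV" using not_bounded_UNIV by (metis bounded_subset compact_imp_bounded)
  then have "- V \<noteq> {}" by auto
  then obtain z where z: "z \<notin> V" "dist (f x) z = infdist (f x) (- V)"
    using infdist_attains_inf[OF closed_Compl[OF \<open>open V\<close>], of "f x"] by (metis ComplD)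
  have ball: "ball (f x) (dist (f x) z) \<subseteq> V"
  proof
    fix y assume "y \<in> ball (f x) (dist (f x) z)"
    then show "y \<in> V" using z(2) infdist_le[of y "- V" "f x"] by (cases "y \<in> V") (auto simp: dist_commute)
  qed
  have "f x \<in> V" using \<open>0 < r\<close> by (simp add: V_def)
  then have "0 < dist (f x) z" using z(1) by (metis dist_pos_lt)
  then have "z \<in> closure (ball (f x) (dist (f x) z))" by (simp add: closure_ball)
  also have "\<dots> \<subseteq> f ` cball x r"
    by (rule closure_minimal[OF order_trans[OF ball V_sub]])
       (rule compact_imp_closed[OF \<open>compact (f ` cball x r)\<close>])
  finally obtain u where "u \<in> cball x r" "z = f u" by blast
  with z(1) have "dist x u = r" by (auto simp: V_def)
  with ball \<open>z = f u\<close> show thesis using that unfolding V_def by blast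
qed

section \<open>The boxes\<close>

lemma open_cuboidQ: "open (cuboidQ j0)"
proof -
  have "cuboidQ j0 = (\<Inter>i. {y. 0 < y$i} \<inter> {y. y$i < (if i = j0 then 2 else 1)})"
    unfolding cuboidQ_def by blast
  also have "open \<dots>"
    by (intro open_INT ballI open_Int open_Collect_less continuous_intros) auto
  finally show ?thesis .
qed

lemma open_beam: "open (beam j0)"
  unfolding beam_def by (intro open_Times open_cuboidQ) auto

lemma open_beamM: "open (beamM j0 M)"
  unfolding beamM_def by (intro open_Times open_cuboidQ) auto

lemma beamM_subset_beam: "beamM j0 M \<subseteq> beam j0"
  unfolding beamM_def beam_def by auto

definition cube_side :: "real \<Rightarrow> real" where
  "cube_side t = 1 / real_of_int \<lfloor>1/t\<rfloor>"

definition box_center :: "real \<Rightarrow> real \<Rightarrow> ('m::finite \<Rightarrow> int) \<Rightarrow> 'm pt" where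
  "box_center t0 t j = ((\<chi> i. (real_of_int (j i) + 1/2) * cube_side t), t0 + t/2)"

lemma cube_side_bounds:
  assumes "0 < t" "t < 1/2"
  shows "t \<le> cube_side t" "cube_side t \<le> 2 * t"
proof -
  define k where "k = real_of_int \<lfloor>1/t\<rfloor>"
  have "2 < 1/t" using assms by (simp add: field_simps)
  then have "2 \<le> k" unfolding k_def using le_floor_iff[of 2 "1/t"] by simp
  have "k \<le> 1/t" "1/t < k + 1" unfolding k_def by linarith+
  then have "k * t \<le> 1" "1 < k * t + t" using assms(1) by (simp_all add: field_simps)
  moreover have "t \<le> k * t" using \<open>2 \<le> k\<close> assms(1) by simp
  moreover have "(2 * t) * k = k * t + k * t" by (simp add: algebra_simps)
  ultimately have "k * t \<le> 1" "1 \<le> (2 * t) * k" by linarith+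
  then show "t \<le> cube_side t" "cube_side t \<le> 2 * t"
    using \<open>2 \<le> k\<close> by (simp_all add: cube_side_def k_def[symmetric] field_simps)
qed

lemma floor_inverse_pos: "0 < t \<Longrightarrow> t \<le> 1 \<Longrightarrow> 0 < real_of_int \<lfloor>1/t\<rfloor>"
  using le_floor_iff[of 1 "1/t"] by (simp add: field_simps)

lemma mem_boxP_iff:
  assumes "0 < t" "t \<le> 1"
  shows "p \<in> boxP j0 t0 t j \<longleftrightarrow> p \<in> beam j0
    \<and> (\<forall>i. \<bar>fst p $ i - fst (box_center t0 t j) $ i\<bar> \<le> cube_side t / 2)
    \<and> \<bar>snd p - snd (box_center t0 t j)\<bar> \<le> t / 2"
proof -
  define k where "k = real_of_int \<lfloor>1/t\<rfloor>"
  have "0 < k" unfolding k_def using floor_inverse_pos[OF assms] .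
  then have cube: "(real_of_int (j i) / k \<le> y \<and> y \<le> real_of_int (j i + 1) / k)
      \<longleftrightarrow> \<bar>y - (real_of_int (j i) + 1/2) * cube_side t\<bar> \<le> cube_side t / 2" for i y
    by (auto simp: cube_side_def k_def[symmetric] abs_le_iff field_simps)
  have slab: "(t0 \<le> s \<and> s \<le> t0 + t) \<longleftrightarrow> \<bar>s - (t0 + t/2)\<bar> \<le> t/2" for s
    by linarith
  have "p \<in> boxP j0 t0 t j \<longleftrightarrow> fst p \<in> cuboidQ j0
      \<and> (\<forall>i. real_of_int (j i) / k \<le> fst p $ i \<and> fst p $ i \<le> real_of_int (j i + 1) / k)
      \<and> t0 \<le> snd p \<and> snd p \<le> t0 + t"
    unfolding boxP_def cubeT_def k_def by (auto simp: mem_Times_iff)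
  also have "\<dots> \<longleftrightarrow> p \<in> beam j0
    \<and> (\<forall>i. \<bar>fst p $ i - fst (box_center t0 t j) $ i\<bar> \<le> cube_side t / 2)
    \<and> \<bar>snd p - snd (box_center t0 t j)\<bar> \<le> t / 2"
    unfolding cube slab by (simp add: beam_def box_center_def mem_Times_iff)
  finally show ?thesis .
qed

lemma box_center_margin:
  fixes j0 :: "'m::finite"
  assumes "0 < t" "t \<le> 1" "j \<in> cube_idx j0 t"
  shows "cube_side t / 2 \<le> fst (box_center t0 t j) $ i"
    "fst (box_center t0 t j) $ i + cube_side t / 2 \<le> (if i = j0 then 2 else 1)"
proof -
  define k where "k = real_of_int \<lfloor>1/t\<rfloor>"
  have "0 < k" unfolding k_def using floor_inverse_pos[OF assms(1,2)] .
  have "0 \<le> j i \<and> j i < (if i = j0 then 2 else 1) * \<lfloor>1/t\<rfloor>"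
    using assms(3) by (simp add: cube_idx_def)
  then have "0 \<le> real_of_int (j i)" "real_of_int (j i) + 1 \<le> (if i = j0 then 2 else 1) * k"
    unfolding k_def by (auto split: if_splits)
  then show "cube_side t / 2 \<le> fst (box_center t0 t j) $ i"
    "fst (box_center t0 t j) $ i + cube_side t / 2 \<le> (if i = j0 then 2 else 1)"
    using \<open>0 < k\<close> by (auto simp: box_center_def cube_side_def k_def[symmetric] field_simps)
qed

lemma near_box_center_in_cuboidQ:
  assumes "0 < t" "t \<le> 1" "j \<in> cube_idx j0 t"
    and "\<And>i. \<bar>y $ i - fst (box_center t0 t j) $ i\<bar> < cube_side t / 2"
  shows "y \<in> cuboidQ j0"
  using box_center_margin[OF assms(1-3)] assms(4) unfolding cuboidQ_def
  by (smt (verit, ccfv_threshold) mem_Collect_eq)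

lemma component_le_dist:
  fixes p q :: "'m::finite pt" and i :: 'm
  shows "\<bar>fst p $ i - fst q $ i\<bar> \<le> dist p q" "\<bar>snd p - snd q\<bar> \<le> dist p q"
proof -
  have "\<bar>fst p $ i - fst q $ i\<bar> \<le> dist (fst p) (fst q)"
    using component_le_norm_cart[of "fst p - fst q" i] by (simp add: dist_norm)
  then show "\<bar>fst p $ i - fst q $ i\<bar> \<le> dist p q" using dist_fst_le[of p q] by linarith
  show "\<bar>snd p - snd q\<bar> \<le> dist p q" using dist_snd_le[of p q] by (simp add: dist_real_def)
qed

lemma ball_box_center_subset_beam:
  fixes j0 :: "'m::finite"
  assumes "0 < t" "t < 1/2" "j \<in> cube_idx j0 t"
  shows "ball (box_center t0 t j) (t/2) \<subseteq> beam j0"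
proof
  fix p assume "p \<in> ball (box_center t0 t j) (t/2)"
  then have "\<bar>fst p $ i - fst (box_center t0 t j) $ i\<bar> < cube_side t / 2" for i
    using component_le_dist(1)[where p = p and q = "box_center t0 t j" and i = i] cube_side_bounds[OF assms(1,2)]
    by (simp add: dist_commute)
  then show "p \<in> beam j0"
    using near_box_center_in_cuboidQ[of t j j0 "fst p"] assms by (auto simp: beam_def mem_Times_iff)
qed

lemma cball_box_center_subset_boxP:
  fixes j0 :: "'m::finite"
  assumes "0 < t" "t < 1/2" "j \<in> cube_idx j0 t"
  shows "cball (box_center t0 t j) (t/4) \<subseteq> boxP j0 t0 t j"
proof
  fix p assume "p \<in> cball (box_center t0 t j) (t/4)"
  then have "dist p (box_center t0 t j) \<le> t/4" by (simp add: dist_commute)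
  then have "\<bar>fst p $ i - fst (box_center t0 t j) $ i\<bar> < cube_side t / 2"
    and "\<bar>snd p - snd (box_center t0 t j)\<bar> \<le> t / 2" for i
    using component_le_dist(1)[where p = p and q = "box_center t0 t j" and i = i]
      component_le_dist(2)[where p = p and q = "box_center t0 t j"]
      cube_side_bounds[OF assms(1,2)] assms(1)
    by linarith+
  then show "p \<in> boxP j0 t0 t j"
    using near_box_center_in_cuboidQ[of t j j0 "fst p"] assms
    by (auto simp: mem_boxP_iff beam_def mem_Times_iff less_imp_le)
qed

lemma dist_box_center_le:
  fixes j0 :: "'m::finite"
  assumes "0 < t" "t < 1/2" "p \<in> boxP j0 t0 t j"
  shows "dist (box_center t0 t j) p \<le> (real CARD('m) + 1) * t"
proof -
  let ?c = "box_center t0 t j"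
  have "t \<le> 1" using assms(2) by simp
  then have box: "\<forall>i. \<bar>fst p $ i - fst ?c $ i\<bar> \<le> cube_side t / 2" "\<bar>snd p - snd ?c\<bar> \<le> t / 2"
    using assms(3) unfolding mem_boxP_iff[OF assms(1) \<open>t \<le> 1\<close>] by blast+
  have "\<bar>(fst p - fst ?c) $ i\<bar> \<le> t" for i
    using spec[OF box(1), of i] cube_side_bounds[OF assms(1,2)] by simp
  then have "(\<Sum>i\<in>UNIV. \<bar>(fst p - fst ?c) $ i\<bar>) \<le> real CARD('m) * t"
    using sum_mono[of "UNIV :: 'm set" "\<lambda>i. \<bar>(fst p - fst ?c) $ i\<bar>" "\<lambda>_. t"] by simp
  then have "dist (fst ?c) (fst p) \<le> real CARD('m) * t"
    using norm_le_l1_cart[of "fst p - fst ?c"] by (simp add: dist_norm norm_minus_commute)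
  moreover have "dist ?c p \<le> dist (fst ?c) (fst p) + dist (snd ?c) (snd p)"
    unfolding dist_prod_def by (rule sqrt_sum_squares_le_sum) simp_all
  ultimately show ?thesis using box(2) assms(1) by (simp add: dist_real_def abs_minus_commute algebra_simps)
qed

lemma boxP_subset_beamM: "t0 < M - 1 \<Longrightarrow> t < 1 \<Longrightarrow> boxP j0 t0 t j \<subseteq> beamM j0 M"
  by (auto simp: boxP_def cubeT_def beamM_def)

lemma boxP_closed_Int_beam:
  assumes "0 < t" "t \<le> 1"
  obtains A where "closed A" "boxP j0 t0 t j = A \<inter> beam j0"
proof
  let ?c = "box_center t0 t j"
  show "closed {p. (\<forall>i. \<bar>fst p $ i - fst ?c $ i\<bar> \<le> cube_side t / 2) \<and> \<bar>snd p - snd ?c\<bar> \<le> t / 2}"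
    by (intro closed_Collect_conj closed_Collect_all closed_Collect_le continuous_intros)
  show "boxP j0 t0 t j = {p. (\<forall>i. \<bar>fst p $ i - fst ?c $ i\<bar> \<le> cube_side t / 2)
      \<and> \<bar>snd p - snd ?c\<bar> \<le> t / 2} \<inter> beam j0"
    using mem_boxP_iff[OF assms] by blast
qed

section \<open>The quotient metric and images of boxes\<close>

locale zorich_beam =
  fixes G :: "('m::finite pt \<Rightarrow> 'm pt) set" and j0 :: 'm
  assumes zorich_group: "zorich_group G j0"
begin

lemma
  shows G_id: "id \<in> G"
    and G_comp: "g \<in> G \<Longrightarrow> h \<in> G \<Longrightarrow> g \<circ> h \<in> G"
    and G_inv: "g \<in> G \<Longrightarrow> inv g \<in> G"
    and G_bij: "g \<in> G \<Longrightarrow> bij g"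
    and G_dist: "g \<in> G \<Longrightarrow> dist (g x) (g y) = dist x y"
    and G_moves_beam_off: "g \<in> G \<Longrightarrow> g \<noteq> id \<Longrightarrow> g ` beam j0 \<inter> beam j0 = {}"
proof -
  note z = zorich_group[unfolded zorich_group_def isometry_def]
  show "id \<in> G" using z by (elim conjE)
  show "g \<in> G \<Longrightarrow> h \<in> G \<Longrightarrow> g \<circ> h \<in> G" using z by (elim conjE) blast
  show "g \<in> G \<Longrightarrow> inv g \<in> G" using z by (elim conjE) blast
  show "g \<in> G \<Longrightarrow> bij g" using z by (elim conjE) blast
  show "g \<in> G \<Longrightarrow> dist (g x) (g y) = dist x y" using z by (elim conjE) blast
  show "g \<in> G \<Longrightarrow> g \<noteq> id \<Longrightarrow> g ` beam j0 \<inter> beam j0 = {}" using z by (elim conjE) blast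
qed

lemma G_inv_apply: "g \<in> G \<Longrightarrow> g (inv g x) = x"
  using G_bij bij_is_surj surj_f_inv_f by metis

lemma G_dist_inv: "g \<in> G \<Longrightarrow> dist x (g y) = dist (inv g x) y"
  by (metis G_dist G_inv_apply)

lemma G_images_beam_disjoint:
  assumes "g \<in> G" "g' \<in> G" "g \<noteq> g'"
  shows "g ` beam j0 \<inter> g' ` beam j0 = {}"
proof -
  have "inv g' \<circ> g \<noteq> id"
  proof
    assume "inv g' \<circ> g = id"
    then have "g x = g' x" for x by (metis G_inv_apply assms(2) comp_apply id_apply)
    with assms(3) show False by auto
  qed
  then have off: "(inv g' \<circ> g) ` beam j0 \<inter> beam j0 = {}"
    using assms by (intro G_moves_beam_off G_comp G_inv)
  show ?thesis
  proof (rule ccontr)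
    assume "g ` beam j0 \<inter> g' ` beam j0 \<noteq> {}"
    then obtain b b' where b: "b \<in> beam j0" "b' \<in> beam j0" "g b = g' b'" by blast
    have "inv g' (g' b') = b'" using G_bij[OF assms(2)] by (simp add: bij_is_inj)
    with b have "b' \<in> (inv g' \<circ> g) ` beam j0" by (metis comp_apply image_eqI)
    with off b(2) show False by blast
  qed
qed

lemma G_image_ball:
  assumes "g \<in> G"
  shows "g ` ball c r = ball (g c) r"
proof
  show "g ` ball c r \<subseteq> ball (g c) r"
  proof (rule image_subsetI)
    fix x assume "x \<in> ball c r"
    then show "g x \<in> ball (g c) r" using G_dist[OF assms, of c x] by simp
  qed
  show "ball (g c) r \<subseteq> g ` ball c r"
  proof
    fix y assume "y \<in> ball (g c) r"
    then have "inv g y \<in> ball c r" using G_dist[OF assms, of c "inv g y"] G_inv_apply[OF assms] by simp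
    then show "y \<in> g ` ball c r" using G_inv_apply[OF assms] by (metis image_eqI)
  qed
qed

lemma G_continuous_on: "g \<in> G \<Longrightarrow> continuous_on S g"
  unfolding continuous_on_iff by (metis G_dist)

lemma dB_le: "g \<in> G \<Longrightarrow> dB G x y \<le> dist x (g y)"
  unfolding dB_def by (rule cInf_lower) (auto intro!: bdd_belowI[of _ 0])

lemma dB_le_dist: "dB G x y \<le> dist x y"
  using dB_le[OF G_id] by simp

lemma dB_geI: "(\<And>g. g \<in> G \<Longrightarrow> c \<le> dist x (g y)) \<Longrightarrow> c \<le> dB G x y"
  unfolding dB_def by (rule cInf_greatest) (use G_id in auto)

lemma dB_nonneg: "0 \<le> dB G x y"
  by (rule dB_geI) simp

lemma dB_less_obtains:
  assumes "dB G x y < r"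
  obtains g where "g \<in> G" "dist x (g y) < r"
proof -
  have "\<exists>d \<in> {dist x (g y) | g. g \<in> G}. d < r"
    by (rule cInf_lessD) (use assms G_id in \<open>auto simp: dB_def\<close>)
  then show thesis using that by blast
qed

lemma dB_sym: "dB G x y = dB G y x"
proof -
  have "dB G x y \<le> dB G y x" for x y
    by (rule dB_geI) (metis G_dist_inv G_inv dB_le dist_commute)
  then show ?thesis by (meson antisym)
qed

lemma dB_triangle: "dB G x z \<le> dB G x y + dB G y z"
proof (rule field_le_epsilon)
  fix e :: real assume "0 < e"
  obtain g where g: "g \<in> G" "dist x (g y) < dB G x y + e/2"
    using dB_less_obtains[of x y "dB G x y + e/2"] \<open>0 < e\<close> by auto
  obtain h where h: "h \<in> G" "dist y (h z) < dB G y z + e/2"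
    using dB_less_obtains[of y z "dB G y z + e/2"] \<open>0 < e\<close> by auto
  have "dB G x z \<le> dist x (g (h z))"
    using dB_le[OF G_comp[OF g(1) h(1)]] by simp
  also have "\<dots> \<le> dist x (g y) + dist y (h z)"
    using dist_triangle[of x "g (h z)" "g y"] G_dist[OF g(1)] by simp
  finally show "dB G x z \<le> dB G x y + dB G y z + e" using g h by linarith
qed

lemma dB_ge_min_dist:
  assumes "y \<in> beam j0" "ball x r \<subseteq> beam j0"
  shows "min (dist x y) r \<le> dB G x y"
proof (rule dB_geI)
  fix g assume "g \<in> G"
  show "min (dist x y) r \<le> dist x (g y)"
  proof (cases "g = id")
    case False
    then have "g y \<notin> ball x r" using G_moves_beam_off[OF \<open>g \<in> G\<close>] assms by blast
    then show ?thesis by simp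
  qed simp
qed

lemma dB_pos:
  assumes "x \<in> beam j0" "y \<in> beam j0" "x \<noteq> y"
  shows "0 < dB G x y"
proof -
  obtain r where "0 < r" "ball x r \<subseteq> beam j0"
    using open_beam assms(1) open_contains_ball by blast
  then show ?thesis using dB_ge_min_dist[OF assms(2)] assms(3) by (smt (verit) dist_pos_lt)
qed

lemma dB_le_dB_diam:
  assumes "\<And>y. y \<in> S \<Longrightarrow> dB G z y \<le> \<rho>" "x \<in> S" "y \<in> S"
  shows "dB G x y \<le> dB_diam G S"
proof -
  have "dB G x' y' \<le> 2 * \<rho>" if "x' \<in> S" "y' \<in> S" for x' y'
  proof -
    have "dB G x' y' \<le> dB G x' z + dB G z y'" by (rule dB_triangle)
    then show ?thesis using dB_sym[of x' z] assms(1)[OF that(1)] assms(1)[OF that(2)] by linarith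
  qed
  then have "bdd_above ((\<lambda>p. dB G (fst p) (snd p)) ` (S \<times> S))"
    by (intro bdd_aboveI2[where M = "2 * \<rho>"]) auto
  then show ?thesis
    unfolding dB_diam_def using cSUP_upper[of "(x, y)" "S \<times> S"] assms(2,3) by fastforce
qed

lemma dB_diam_le_twice_radius:
  assumes "\<And>y. y \<in> S \<Longrightarrow> dB G z y \<le> \<rho>" "S \<noteq> {}"
  shows "dB_diam G S \<le> 2 * \<rho>"
  unfolding dB_diam_def
proof (rule cSUP_least)
  fix p assume "p \<in> S \<times> S"
  have "dB G (fst p) (snd p) \<le> dB G (fst p) z + dB G z (snd p)" by (rule dB_triangle)
  then show "dB G (fst p) (snd p) \<le> 2 * \<rho>"
    using dB_sym[of "fst p" z] assms(1)[of "fst p"] assms(1)[of "snd p"] \<open>p \<in> S \<times> S\<close>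
    by (auto simp: mem_Times_iff)
qed (use assms(2) in auto)

lemma quasisymmetric_continuous_on:
  assumes qs: "qs_gauge \<eta>" and f: "quasisymmetric_on (dB G) (dB G) S f \<eta>"
    and S: "open S" "S \<subseteq> beam j0" and img: "f ` S \<subseteq> beam j0"
  shows "continuous_on S f"
  unfolding continuous_on_iff
proof (intro ballI allI impI)
  fix a e assume a: "a \<in> S" and "(0::real) < e"
  obtain b where b: "b \<in> S" "b \<noteq> a"
    using interior_limit_point[of a S] a S(1) by (metis interior_open islimptE zero_less_one)
  have "f b \<noteq> f a" using f a b unfolding quasisymmetric_on_def by (meson inj_onD)
  then have c: "0 < dB G (f a) (f b)" using img a b by (intro dB_pos) auto
  have ab: "0 < dB G a b" using S(2) a b by (intro dB_pos) auto
  obtain r where r: "0 < r" "ball (f a) r \<subseteq> beam j0"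
    using open_beam img a open_contains_ball by blast
  obtain s where s: "0 < s" "\<And>z. 0 \<le> z \<Longrightarrow> z < s \<Longrightarrow> \<eta> z < min e r / dB G (f a) (f b)"
    using qs_gauge_small_near_zero[OF qs, of "min e r / dB G (f a) (f b)"] \<open>0 < e\<close> r(1) c by auto
  show "\<exists>d>0. \<forall>y\<in>S. dist y a < d \<longrightarrow> dist (f y) (f a) < e"
  proof (intro exI[of _ "s * dB G a b"] conjI ballI impI)
    show "0 < s * dB G a b" using s(1) ab by simp
    fix y assume y: "y \<in> S" "dist y a < s * dB G a b"
    have "dB G a y / dB G a b < s"
      using dB_le_dist[of a y] y(2) ab by (simp add: dist_commute divide_less_eq)
    then have "\<eta> (dB G a y / dB G a b) < min e r / dB G (f a) (f b)"
      using s(2) dB_nonneg ab by simp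
    moreover have "dB G (f a) (f y) \<le> \<eta> (dB G a y / dB G a b) * dB G (f a) (f b)"
      by (rule quasisymmetric_onD[OF f a y(1) b(1) b(2)[symmetric] c])
    ultimately have "dB G (f a) (f y) < min e r"
      using c by (simp add: pos_less_divide_eq mult.commute)
    moreover have "min (dist (f a) (f y)) r \<le> dB G (f a) (f y)"
      using img y(1) r(2) by (intro dB_ge_min_dist) auto
    ultimately show "dist (f y) (f a) < e"
      unfolding min_def by (auto simp: dist_commute split: if_splits)
  qed
qed

lemma measure_le_ball_if_dB_less:
  assumes K: "compact K" "K \<subseteq> beam j0" and close: "\<And>y. y \<in> K \<Longrightarrow> dB G z y < R"
  shows "measure lebesgue K \<le> measure lebesgue (ball z R)"
proof -
  have "K \<subseteq> (\<Union>g\<in>G. ball (inv g z) R)"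
  proof
    fix y assume "y \<in> K"
    then obtain g where "g \<in> G" "dist z (g y) < R" using dB_less_obtains close by blast
    then show "y \<in> (\<Union>g\<in>G. ball (inv g z) R)" by (auto simp: G_dist_inv)
  qed
  then obtain F where F: "F \<subseteq> G" "finite F" "K \<subseteq> (\<Union>g\<in>F. ball (inv g z) R)"
    using compactE_image[OF K(1), of G "\<lambda>g. ball (inv g z) R"] by auto
  define A where "A g = K \<inter> ball (inv g z) R" for g
  have A: "A g \<in> lmeasurable" for g
    unfolding A_def
    by (intro fmeasurable_Int_fmeasurable lmeasurable_compact K(1) fmeasurableD lmeasurable_ball)
  have gA: "g ` A g = g ` K \<inter> ball z R" if "g \<in> G" for g
    using that unfolding A_def
    by (simp add: image_Int bij_is_inj G_bij G_image_ball G_inv_apply)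
  have gA_meas: "g ` A g \<in> lmeasurable" if "g \<in> G" for g
    unfolding gA[OF that]
    by (intro fmeasurable_Int_fmeasurable lmeasurable_compact fmeasurableD lmeasurable_ball
        compact_continuous_image G_continuous_on that K(1))
  have A_le: "measure lebesgue (A g) \<le> measure lebesgue (g ` A g)" if "g \<in> G" for g
  proof -
    have "inv g ` g ` A g = A g" using G_bij[OF that] by (simp add: bij_is_inj image_image)
    then show ?thesis
      using measure_isometry_image_le[of "inv g" "g ` A g"] G_dist[OF G_inv[OF that]]
        gA_meas[OF that] A[of g] by (simp add: fmeasurableD)
  qed
  have "K \<subseteq> (\<Union>g\<in>F. A g)" using F(3) by (auto simp: A_def)
  moreover have "(\<Union>g\<in>F. A g) \<in> lmeasurable" using F(2) A by (intro fmeasurable.finite_UN) auto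
  ultimately have "measure lebesgue K \<le> measure lebesgue (\<Union>g\<in>F. A g)"
    using K(1) by (intro measure_mono_fmeasurable) (auto simp: lmeasurable_compact fmeasurableD)
  also have "\<dots> \<le> (\<Sum>g\<in>F. measure lebesgue (A g))"
    using F(2) A by (intro measure_UNION_le) (auto simp: fmeasurableD)
  also have "\<dots> \<le> (\<Sum>g\<in>F. measure lebesgue (g ` A g))"
    using A_le F(1) by (intro sum_mono) blast
  also have "\<dots> = measure lebesgue (\<Union>g\<in>F. g ` A g)"
  proof (rule measure_UNION'[symmetric])
    show "pairwise (\<lambda>g g'. disjnt (g ` A g) (g' ` A g')) F"
      using G_images_beam_disjoint F(1) K(2) unfolding pairwise_def disjnt_def A_def by blast
  qed (use F gA_meas in auto)
  also have "\<dots> \<le> measure lebesgue (ball z R)"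
  proof (rule measure_mono_fmeasurable)
    show "(\<Union>g\<in>F. g ` A g) \<subseteq> ball z R" using F(1) gA by blast
    show "(\<Union>g\<in>F. g ` A g) \<in> sets lebesgue"
      using F gA_meas by (intro fmeasurableD fmeasurable.finite_UN) auto
  qed simp
  finally show ?thesis .
qed

lemma measure_continuous_image_le_ball:
  assumes S: "closed A" "S = A \<inter> beam j0" and f: "continuous_on S f" "f ` S \<subseteq> beam j0"
    and close: "\<And>y. y \<in> f ` S \<Longrightarrow> dB G z y < R"
  shows "f ` S \<in> lmeasurable" "measure lebesgue (f ` S) \<le> measure lebesgue (ball z R)"
proof -
  obtain K where K: "\<And>k::nat. compact (K k)" "S = (\<Union>k. K k)"
    using closed_Int_open_Union_compact[OF S(1) open_beam] S(2) by metis
  have "measure lebesgue (f ` L) \<le> measure lebesgue (ball z R)" if "compact L" "L \<subseteq> S" for L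
  proof (rule measure_le_ball_if_dB_less)
    show "compact (f ` L)"
      by (rule compact_continuous_image[OF continuous_on_subset[OF f(1) that(2)] that(1)])
    show "f ` L \<subseteq> beam j0" using that(2) f(2) by blast
    show "\<And>y. y \<in> f ` L \<Longrightarrow> dB G z y < R" using that(2) close by blast
  qed
  then show "f ` S \<in> lmeasurable" "measure lebesgue (f ` S) \<le> measure lebesgue (ball z R)"
    using measure_continuous_image_Union_compact_le[of K f] K f(1) by auto
qed

context
  fixes \<eta> f M t0 t j
  assumes qs: "qs_gauge \<eta>" and f: "quasisymmetric_on (dB G) (dB G) (beamM j0 M) f \<eta>"
    and img: "f ` beamM j0 M \<subseteq> beam j0"
    and t: "0 < t" "t < 1/2" and tM: "t0 < M - 1" and j: "j \<in> cube_idx j0 t"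
begin

lemma box_subset_beamM: "boxP j0 t0 t j \<subseteq> beamM j0 M"
  by (rule boxP_subset_beamM) (use tM t in auto)

lemma quasisymmetric_continuous_on_beamM: "continuous_on (beamM j0 M) f"
  by (rule quasisymmetric_continuous_on[OF qs f open_beamM beamM_subset_beam img])

lemma quasisymmetric_image_box_radius:
  fixes c defines "c \<equiv> box_center t0 t j"
  obtains u where "u \<in> boxP j0 t0 t j" "f c \<noteq> f u"
    "ball (f c) (dist (f c) (f u)) \<subseteq> f ` boxP j0 t0 t j"
    "\<And>p. p \<in> boxP j0 t0 t j
       \<Longrightarrow> dB G (f c) (f p) \<le> \<eta> (4 * (real CARD('m) + 1)) * dist (f c) (f u)"
proof -
  let ?P = "boxP j0 t0 t j"
  have cP: "cball c (t/4) \<subseteq> ?P" unfolding c_def by (rule cball_box_center_subset_boxP[OF t j])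
  have inj: "inj_on f ?P"
    using f box_subset_beamM unfolding quasisymmetric_on_def by (meson inj_on_subset)
  have "cball c (t/4) \<subseteq> beamM j0 M" "0 < t/4" using cP box_subset_beamM t(1) by auto
  then obtain u where u: "dist c u = t/4" "ball (f c) (dist (f c) (f u)) \<subseteq> f ` ball c (t/4)"
    using injective_image_contains_ball_to_sphere[of c "t/4" f, OF
        continuous_on_subset[OF quasisymmetric_continuous_on_beamM] inj_on_subset[OF inj cP]]
    by blast
  have "c \<in> ?P" "u \<in> ?P" using cP u(1) t(1) by auto
  have "c \<noteq> u" using u(1) t(1) by auto
  then have "f c \<noteq> f u" using inj \<open>c \<in> ?P\<close> \<open>u \<in> ?P\<close> by (meson inj_onD)
  have PB: "?P \<subseteq> beam j0" using box_subset_beamM beamM_subset_beam by blast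
  have "dB G c u = t/4"
  proof (rule antisym)
    show "dB G c u \<le> t/4" using dB_le_dist[of c u] u(1) by simp
    have "ball c (t/2) \<subseteq> beam j0" unfolding c_def by (rule ball_box_center_subset_beam[OF t j])
    then show "t/4 \<le> dB G c u" using dB_ge_min_dist[of u c "t/2"] \<open>u \<in> ?P\<close> PB u(1) t(1) by auto
  qed
  have fcu: "0 < dB G (f c) (f u)"
    using \<open>f c \<noteq> f u\<close> img box_subset_beamM \<open>c \<in> ?P\<close> \<open>u \<in> ?P\<close> by (intro dB_pos) auto
  show thesis
  proof (rule that[OF \<open>u \<in> ?P\<close> \<open>f c \<noteq> f u\<close>])
    have "f ` ball c (t/4) \<subseteq> f ` ?P" using cP ball_subset_cball by (intro image_mono) blast
    with u(2) show "ball (f c) (dist (f c) (f u)) \<subseteq> f ` ?P" by (rule order_trans)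
    fix p assume "p \<in> ?P"
    have "dB G c p / dB G c u \<le> 4 * (real CARD('m) + 1)"
      using dB_le_dist[of c p] dist_box_center_le[OF t \<open>p \<in> ?P\<close>] \<open>dB G c u = t/4\<close> t(1)
      by (simp add: c_def field_simps)
    then have "\<eta> (dB G c p / dB G c u) \<le> \<eta> (4 * (real CARD('m) + 1))"
      by (rule qs_gauge_mono[OF qs divide_nonneg_nonneg[OF dB_nonneg dB_nonneg]])
    then have "\<eta> (dB G c p / dB G c u) * dB G (f c) (f u) \<le> \<eta> (4 * (real CARD('m) + 1)) * dist (f c) (f u)"
      by (rule mult_mono[OF _ dB_le_dist qs_gauge_nonneg[OF qs] dB_nonneg]) simp
    moreover have "dB G (f c) (f p) \<le> \<eta> (dB G c p / dB G c u) * dB G (f c) (f u)"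
      using \<open>c \<in> ?P\<close> \<open>p \<in> ?P\<close> \<open>u \<in> ?P\<close> box_subset_beamM
      by (intro quasisymmetric_onD[OF f _ _ _ \<open>c \<noteq> u\<close> fcu]) auto
    ultimately show "dB G (f c) (f p) \<le> \<eta> (4 * (real CARD('m) + 1)) * dist (f c) (f u)"
      by linarith
  qed
qed

lemma quasisymmetric_box_volume_ratio:
  defines "n \<equiv> CARD('m) + 1" and "\<kappa> \<equiv> measure lebesgue (ball (0::'m pt) 1)"
    and "H \<equiv> \<eta> (4 * (real CARD('m) + 1))"
  shows "\<kappa> / (2 * H) ^ n
      \<le> measure lebesgue (f ` boxP j0 t0 t j) / dB_diam G (f ` boxP j0 t0 t j) ^ n"
    and "measure lebesgue (f ` boxP j0 t0 t j) / dB_diam G (f ` boxP j0 t0 t j) ^ n \<le> \<kappa> * 2 ^ n"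
proof -
  let ?P = "boxP j0 t0 t j"
  define c where "c = box_center t0 t j"
  define D where "D = dB_diam G (f ` ?P)"
  define m where "m = measure lebesgue (f ` ?P)"
  obtain u where u: "u \<in> ?P" "f c \<noteq> f u" "ball (f c) (dist (f c) (f u)) \<subseteq> f ` ?P"
    and near: "\<And>p. p \<in> ?P \<Longrightarrow> dB G (f c) (f p) \<le> H * dist (f c) (f u)"
    using quasisymmetric_image_box_radius unfolding c_def H_def by blast
  define \<delta> where "\<delta> = dist (f c) (f u)"
  have "0 < \<delta>" using u(2) by (simp add: \<delta>_def)
  have "c \<in> cball c (t/4)" using t(1) by simp
  then have "c \<in> ?P" using cball_box_center_subset_boxP[OF t j, of t0] unfolding c_def by blast
  have fPB: "f ` ?P \<subseteq> beam j0" using box_subset_beamM img by blast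
  have near': "\<And>y. y \<in> f ` ?P \<Longrightarrow> dB G (f c) y \<le> H * \<delta>" using near by (auto simp: \<delta>_def)
  have "D \<le> 2 * (H * \<delta>)"
    unfolding D_def using \<open>c \<in> ?P\<close> by (intro dB_diam_le_twice_radius[OF near']) auto
  have le_D: "dB G (f c) y \<le> D" if "y \<in> f ` ?P" for y
    unfolding D_def by (rule dB_le_dB_diam[OF near' imageI[OF \<open>c \<in> ?P\<close>] that])
  have "0 < dB G (f c) (f u)" using u(1,2) \<open>c \<in> ?P\<close> fPB by (intro dB_pos) auto
  then have "0 < D" using le_D[of "f u"] u(1) by simp
  have "0 < H" unfolding H_def using qs_gauge_strict_mono[OF qs, of 0] qs_gauge_zero[OF qs] by simp
  have "0 < \<kappa>" unfolding \<kappa>_def by (rule measure_unit_ball_pos)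
  have "t \<le> 1" using t by simp
  then obtain A where A: "closed A" "?P = A \<inter> beam j0" using boxP_closed_Int_beam t(1) by blast
  have close: "\<And>y. y \<in> f ` ?P \<Longrightarrow> dB G (f c) y < 2 * D" using le_D \<open>0 < D\<close> by fastforce
  have fP: "f ` ?P \<in> lmeasurable" "m \<le> measure lebesgue (ball (f c) (2 * D))"
    using measure_continuous_image_le_ball[OF A
        continuous_on_subset[OF quasisymmetric_continuous_on_beamM box_subset_beamM] fPB close]
    unfolding m_def by auto
  then have upper: "m \<le> \<kappa> * (2 * D) ^ n"
    using measure_ball_scale[of "2 * D" "f c"] \<open>0 < D\<close> by (simp add: \<kappa>_def n_def)
  have "measure lebesgue (ball (f c) \<delta>) \<le> m"
    unfolding m_def using u(3) fP(1) by (intro measure_mono_fmeasurable) (auto simp: \<delta>_def)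
  then have lower: "\<kappa> * \<delta> ^ n \<le> m"
    using measure_ball_scale[of \<delta> "f c"] \<open>0 < \<delta>\<close> by (simp add: \<kappa>_def n_def)
  have "0 < D ^ n" "0 < (2 * H) ^ n" using \<open>0 < D\<close> \<open>0 < H\<close> by simp_all
  have "D ^ n \<le> (2 * H) ^ n * \<delta> ^ n"
    using power_mono[OF \<open>D \<le> 2 * (H * \<delta>)\<close>, of n] \<open>0 < D\<close> by (simp add: power_mult_distrib)
  then have "\<kappa> * D ^ n \<le> (2 * H) ^ n * (\<kappa> * \<delta> ^ n)"
    using \<open>0 < \<kappa>\<close> by (simp add: mult_left_mono mult.left_commute)
  also have "\<dots> \<le> (2 * H) ^ n * m"
    using mult_left_mono[OF lower] \<open>0 < (2 * H) ^ n\<close> by simp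
  finally show "\<kappa> / (2 * H) ^ n \<le> m / D ^ n"
    using \<open>0 < D ^ n\<close> \<open>0 < (2 * H) ^ n\<close> by (simp add: field_simps)
  show "m / D ^ n \<le> \<kappa> * 2 ^ n"
    using upper \<open>0 < D ^ n\<close> by (simp add: field_simps power_mult_distrib)
qed

end

lemma quasisymmetric_box_volume_ratio_uniform:
  assumes qs: "qs_gauge \<eta>"
  shows "\<exists>C1>1. \<forall>M f t0 t.
            quasisymmetric_on (dB G) (dB G) (beamM j0 M) f \<eta> \<and> f ` beamM j0 M \<subseteq> beam j0 \<and>
            t0 < M - 1 \<and> 0 < t \<and> t < 1/2 \<longrightarrow>
            (\<forall>j\<in>cube_idx j0 t.
               1 / C1 \<le> measure lebesgue (f ` boxP j0 t0 t j) / (dB_diam G (f ` boxP j0 t0 t j)) ^ (CARD('m) + 1)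
             \<and> measure lebesgue (f ` boxP j0 t0 t j) / (dB_diam G (f ` boxP j0 t0 t j)) ^ (CARD('m) + 1) \<le> C1)"
proof -
  define n where "n = CARD('m) + 1"
  define \<kappa> where "\<kappa> = measure lebesgue (ball (0::'m pt) 1)"
  define H where "H = \<eta> (4 * (real CARD('m) + 1))"
  define C1 where "C1 = max 2 (max (\<kappa> * 2 ^ n) ((2 * H) ^ n / \<kappa>))"
  have "0 < \<kappa>" unfolding \<kappa>_def by (rule measure_unit_ball_pos)
  have "0 < H" unfolding H_def using qs_gauge_strict_mono[OF qs, of 0] qs_gauge_zero[OF qs] by simp
  have "1 / C1 \<le> 1 / ((2 * H) ^ n / \<kappa>)"
    using \<open>0 < \<kappa>\<close> \<open>0 < H\<close> by (intro divide_left_mono) (auto simp: C1_def)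
  then have lower: "1 / C1 \<le> \<kappa> / (2 * H) ^ n" by simp
  have upper: "\<kappa> * 2 ^ n \<le> C1" by (simp add: C1_def)
  show ?thesis
  proof (intro exI[of _ C1] conjI allI impI ballI)
    show "1 < C1" by (simp add: C1_def)
    fix M f t0 t j
    assume "quasisymmetric_on (dB G) (dB G) (beamM j0 M) f \<eta> \<and> f ` beamM j0 M \<subseteq> beam j0
      \<and> t0 < M - 1 \<and> 0 < t \<and> t < 1/2" and j: "j \<in> cube_idx j0 t"
    then have "quasisymmetric_on (dB G) (dB G) (beamM j0 M) f \<eta>" "f ` beamM j0 M \<subseteq> beam j0"
      "0 < t" "t < 1/2" "t0 < M - 1" by auto
    note ratio = quasisymmetric_box_volume_ratio[OF qs this j]
    show "1 / C1 \<le> measure lebesgue (f ` boxP j0 t0 t j) / dB_diam G (f ` boxP j0 t0 t j) ^ (CARD('m) + 1)"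
      "measure lebesgue (f ` boxP j0 t0 t j) / dB_diam G (f ` boxP j0 t0 t j) ^ (CARD('m) + 1) \<le> C1"
      using ratio lower upper unfolding n_def \<kappa>_def H_def by linarith+
  qed
qed

end

theorem lemma3p2:
  fixes G :: "((real^'m::finite) \<times> real \<Rightarrow> (real^'m) \<times> real) set"
    and j0 :: 'm and \<eta> :: "real \<Rightarrow> real"
  assumes "zorich_group G j0" and "qs_gauge \<eta>"
  shows "((\<lambda>t. real (card (cube_idx j0 t)) / t powr (1 - real (CARD('m) + 1))) \<longlongrightarrow> 2)
            (at_right 0)
       \<and> (\<exists>C1>1. \<forall>M f t0 t.
            quasisymmetric_on (dB G) (dB G) (beamM j0 M) f \<eta> \<and> f ` beamM j0 M \<subseteq> beam j0 \<and>
            t0 < M - 1 \<and> 0 < t \<and> t < 1/2 \<longrightarrow>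
            (\<forall>j\<in>cube_idx j0 t.
               1 / C1 \<le> measure lebesgue (f ` boxP j0 t0 t j) / (dB_diam G (f ` boxP j0 t0 t j)) ^ (CARD('m) + 1)
             \<and> measure lebesgue (f ` boxP j0 t0 t j) / (dB_diam G (f ` boxP j0 t0 t j)) ^ (CARD('m) + 1) \<le> C1))"
proof -
  interpret zorich_beam G j0 by unfold_locales (rule assms(1))
  show ?thesis
    by (rule conjI[OF tendsto_card_cube_idx quasisymmetric_box_volume_ratio_uniform[OF assms(2)]])
qed

end
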